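(* Let $m\ge2$ and let $C=\mathrm{diag}(c_1,\dots,c_m)$ be a real diagonal matrix. Let $\mathcal S_m$, $\mathcal D_m$, $\mu$, $\dot P_m$ and the quantum SLD Fisher metric $\langle\cdot,\cdot\rangle$ be as in the context. Let $\Lambda(w)=-\frac12 w^TCw$ on $\mathcal S_m$, with gradient (with respect to the metric $u^Tu'$ on $T_w\mathcal S_m=\{u: w^Tu=0\}$) $\mathrm{grad}\,\Lambda(w)=-Cw+(w^TCw)w$, and let $\mu_\ast\mathrm{grad}\,\Lambda$ be the vector field on $\mathcal D_m$ defined by $\mu_\ast\mathrm{grad}\,\Lambda(\mu(w))=\mu_{\ast,w}(\mathrm{grad}\,\Lambda(w))$ for $w\in\mathcal S_m$. Let $L$ be a smooth function on $\dot P_m$ and $\mathrm{grad}\,L$ its gradient with respect to the quantum SLD Fisher metric. If $L(\mu(w))=4\Lambda(w)$ for all $w\in\mathcal S_m$, then for every $\Theta\in\mathcal D_m$ and every $Z\in T_\Theta\mathcal D_m$, $$\langle \mathrm{grad}\,L(\Theta),Z\rangle_\Theta=\langle\mu_\ast\mathrm{grad}\,\Lambda(\Theta),Z\rangle_\Theta.$$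
   Context: $\mathcal S_m=\{w\in\mathbf R^m:\|w\|=1,\ w_k\ne0\ \forall k\}$; $\mathcal D_m=\{\mathrm{diag}(\theta_1,\dots,\theta_m):\sum\theta_k=1,\theta_k>0\}$ with $T_\Theta\mathcal D_m$ the traceless real diagonal matrices; $\mu(w)=\mathrm{diag}(w_1^2,\dots,w_m^2)$ with differential $\mu_{\ast,w}(u)=2\,\mathrm{diag}(w_1u_1,\dots,w_mu_m)$. (The vector field $\mu_\ast\mathrm{grad}\,\Lambda$ is well defined since $\mathrm{grad}\,\Lambda$ is equivariant under sign changes of coordinates and $\mu$ is invariant under them.) $\dot P_m$ is the set of $m\times m$ complex Hermitian positive definite trace-one matrices, $T_\rho\dot P_m$ the Hermitian traceless matrices. The SLD $\mathcal L_\rho(\Xi)$ is the Hermitian solution of $\frac12(\rho\mathcal L_\rho(\Xi)+\mathcal L_\rho(\Xi)\rho)=\Xi$, and the quantum SLD Fisher metric is $\langle\Xi,\Xi'\rangle_\rho=\frac12\mathrm{tr}[\rho(\mathcal L_\rho(\Xi)\mathcal L_\rho(\Xi')+\mathcal L_\rho(\Xi')\mathcal L_\rho(\Xi))]$. The gradient $\mathrm{grad}\,L(\rho)\in T_\rho\dot P_m$ is defined by $\langle\mathrm{grad}\,L(\rho),\Xi\rangle_\rho=\frac{d}{d\tau}\big|_{\tau=0}L(r(\tau))$ for every smooth curve $r$ in $\dot P_m$ with $r(0)=\rho$, $r'(0)=\Xi$. *)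

theory Defs
  imports "HOL-Analysis.Analysis"
begin

type_synonym 'n cmat = "complex^'n^'n"

text \<open>C-infinity on a set S: there is a family of iterated directional derivatives
  D vs (D [] = f), each Frechet differentiable on S with derivative v mapsto D (v # vs).\<close>
definition smooth_on :: "'a::real_normed_vector set \<Rightarrow> ('a \<Rightarrow> 'b::real_normed_vector) \<Rightarrow> bool" where
  "smooth_on S f \<longleftrightarrow> (\<exists>D :: 'a list \<Rightarrow> 'a \<Rightarrow> 'b.
      (\<forall>x\<in>S. D [] x = f x) \<and>
      (\<forall>vs. \<forall>x\<in>S. (D vs has_derivative (\<lambda>v. D (v # vs) x)) (at x)))"

definition mtrace :: "'n::finite cmat \<Rightarrow> complex" where
  "mtrace A = (\<Sum>i\<in>UNIV. A$i$i)"

definition hermitian :: "'n::finite cmat \<Rightarrow> bool" where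
  "hermitian A \<longleftrightarrow> (\<forall>i j. A$i$j = cnj (A$j$i))"

definition posdef :: "'n::finite cmat \<Rightarrow> bool" where
  "posdef A \<longleftrightarrow> (\<forall>x::complex^'n. x \<noteq> 0 \<longrightarrow> Re (\<Sum>i\<in>UNIV. cnj (x$i) * (A *v x)$i) > 0)"

definition Pdot :: "'n::finite cmat set" where
  "Pdot = {\<rho>. hermitian \<rho> \<and> posdef \<rho> \<and> mtrace \<rho> = 1}"

definition TPdot :: "'n::finite cmat set" where
  "TPdot = {X. hermitian X \<and> mtrace X = 0}"

definition sld :: "'n::finite cmat \<Rightarrow> 'n cmat \<Rightarrow> 'n cmat" where
  "sld \<rho> \<Xi> = (THE X. hermitian X \<and> (1/2) *\<^sub>R (\<rho> ** X + X ** \<rho>) = \<Xi>)"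

text \<open>Quantum SLD Fisher metric (its value is real; we take the real part).\<close>
definition sld_inner :: "'n::finite cmat \<Rightarrow> 'n cmat \<Rightarrow> 'n cmat \<Rightarrow> real" where
  "sld_inner \<rho> X Y = Re (mtrace ((1/2) *\<^sub>R (\<rho> ** (sld \<rho> X ** sld \<rho> Y + sld \<rho> Y ** sld \<rho> X))))"

definition sld_grad :: "('n::finite cmat \<Rightarrow> real) \<Rightarrow> 'n cmat \<Rightarrow> 'n cmat" where
  "sld_grad L \<rho> = (THE G. G \<in> TPdot \<and>
     (\<forall>(r :: real \<Rightarrow> 'n cmat) \<Xi> e. e > 0 \<and> smooth_on {-e<..<e} r \<and> r ` {-e<..<e} \<subseteq> Pdot
        \<and> r 0 = \<rho> \<and> (r has_vector_derivative \<Xi>) (at 0)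
        \<longrightarrow> ((\<lambda>\<tau>. L (r \<tau>)) has_real_derivative sld_inner \<rho> G \<Xi>) (at 0)))"

definition diagc :: "real^'n::finite \<Rightarrow> 'n cmat" where
  "diagc z = (\<chi> i j. if i = j then complex_of_real (z$i) else 0)"

definition Sm :: "(real^'n::finite) set" where
  "Sm = {w. norm w = 1 \<and> (\<forall>k. w$k \<noteq> 0)}"

definition Dm :: "'n::finite cmat set" where
  "Dm = {diagc \<theta> | \<theta>. (\<forall>k. \<theta>$k > 0) \<and> sum (\<lambda>k. \<theta>$k) UNIV = 1}"

definition TDm :: "'n::finite cmat set" where
  "TDm = {diagc z | z. sum (\<lambda>k. z$k) UNIV = 0}"

definition mu :: "real^'n::finite \<Rightarrow> 'n cmat" where
  "mu w = diagc (\<chi> k. (w$k)^2)"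

definition mu_push :: "real^'n::finite \<Rightarrow> real^'n \<Rightarrow> 'n cmat" where
  "mu_push w u = diagc (\<chi> k. 2 * w$k * u$k)"

definition Lambda :: "real^'n::finite \<Rightarrow> real^'n \<Rightarrow> real" where
  "Lambda c w = - (1/2) * (\<Sum>k\<in>UNIV. c$k * (w$k)^2)"

definition grad_Lambda :: "real^'n::finite \<Rightarrow> real^'n \<Rightarrow> real^'n" where
  "grad_Lambda c w = - (\<chi> k. c$k * w$k) + (\<Sum>k\<in>UNIV. c$k * (w$k)^2) *\<^sub>R w"

text \<open>The pushed-forward vector field on Dm: evaluated at Theta = mu w using the
  preimage w with positive entries (well defined by sign-equivariance).\<close>
definition mu_grad_Lambda :: "real^'n::finite \<Rightarrow> 'n cmat \<Rightarrow> 'n cmat" where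
  "mu_grad_Lambda c \<Theta> = (let w = (\<chi> k. sqrt (Re (\<Theta>$k$k))) in mu_push w (grad_Lambda c w))"

end

theory Submission
  imports Defs
begin

text \<open>At a diagonal point \<Theta> = diag t the SLD equation decouples entrywise,
  L(X)_ij = 2 X_ij / (t_i + t_j), so the SLD Fisher metric is an explicit positive weighted
  inner product on Hermitian matrices. Lines \<Theta> + \<tau> \<Xi> stay positive definite of trace one
  for small \<tau>, hence every tangent direction is realised by an admissible curve and the
  gradient of L is the unique traceless Hermitian G with <G, \<Xi>> = dL(\<Xi>); such a G can be
  written down explicitly. So the left-hand side equals dL(Z). Along \<Theta> + \<tau> Z the point stays
  in D_m = \<mu>(S_m), on which L = 4 \<Lambda> o \<mu>^-1 is the affine map \<theta> \<mapsto> -2 \<Sum>k. c_k \<theta>_k,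
  so dL(Z) = -2 \<Sum>k. c_k z_k. The explicit formula
  \<mu>_* grad \<Lambda>(\<Theta>) = diag(2 \<theta>_k (w^T C w - c_k)) gives the same value because \<Sum>k. z_k = 0.\<close>

definition ctranspose :: "'n::finite cmat \<Rightarrow> 'n cmat" where
  "ctranspose M = (\<chi> i j. cnj (M$j$i))"

lemma hermitian_iff_ctranspose: "hermitian M \<longleftrightarrow> ctranspose M = M"
  unfolding hermitian_def ctranspose_def vec_eq_iff by (simp add: eq_commute)

lemma bounded_linear_ctranspose: "bounded_linear (ctranspose :: 'n::finite cmat \<Rightarrow> 'n cmat)"
  unfolding linear_conv_bounded_linear[symmetric]
  by (rule linearI) (simp_all add: ctranspose_def vec_eq_iff)

lemma bounded_linear_mtrace: "bounded_linear (mtrace :: 'n::finite cmat \<Rightarrow> complex)"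
  unfolding linear_conv_bounded_linear[symmetric]
  by (rule linearI) (simp_all add: mtrace_def sum.distrib scaleR_sum_right)

lemma mtrace_add: "mtrace (A + B) = mtrace A + mtrace B"
  by (simp add: mtrace_def sum.distrib)

lemma mtrace_diff: "mtrace (A - B) = mtrace A - mtrace B"
  by (simp add: mtrace_def sum_subtractf)

lemma mtrace_scaleR: "mtrace (c *\<^sub>R M) = c *\<^sub>R mtrace M"
  by (simp add: mtrace_def scaleR_sum_right)

lemma mtrace_diagc: "mtrace (diagc t) = complex_of_real (\<Sum>k\<in>UNIV. t$k)"
  by (simp add: mtrace_def diagc_def)

lemma hermitian_add: "hermitian A \<Longrightarrow> hermitian B \<Longrightarrow> hermitian (A + B)"
  by (simp add: hermitian_iff_ctranspose linear_add bounded_linear.linear[OF bounded_linear_ctranspose])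

lemma hermitian_diff: "hermitian A \<Longrightarrow> hermitian B \<Longrightarrow> hermitian (A - B)"
  by (simp add: hermitian_iff_ctranspose linear_diff bounded_linear.linear[OF bounded_linear_ctranspose])

lemma hermitian_scaleR: "hermitian A \<Longrightarrow> hermitian (c *\<^sub>R A)"
  by (simp add: hermitian_iff_ctranspose linear_scale bounded_linear.linear[OF bounded_linear_ctranspose])

lemma hermitian_diagc: "hermitian (diagc t)"
  by (simp add: hermitian_def diagc_def)

lemma TPdot_diff: "A \<in> TPdot \<Longrightarrow> B \<in> TPdot \<Longrightarrow> A - B \<in> TPdot"
  by (simp add: TPdot_def hermitian_diff mtrace_diff)

lemma diagc_add_scaleR: "diagc t + c *\<^sub>R diagc z = diagc (t + c *\<^sub>R z)"
  by (simp add: diagc_def vec_eq_iff scaleR_conv_of_real[where 'a=complex])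

lemma TDm_subset_TPdot: "TDm \<subseteq> TPdot"
  by (auto simp: TDm_def TPdot_def hermitian_diagc mtrace_diagc)

lemma diagc_mult_left: "(diagc t ** Y)$i$j = complex_of_real (t$i) * Y$i$j"
  unfolding diagc_def matrix_matrix_mult_def by (simp add: if_distrib if_distribR cong: if_cong)

lemma diagc_mult_right: "(Y ** diagc t)$i$j = Y$i$j * complex_of_real (t$j)"
  unfolding diagc_def matrix_matrix_mult_def by (simp add: if_distrib if_distribR cong: if_cong)

definition jordan_prod :: "'n::finite cmat \<Rightarrow> 'n cmat \<Rightarrow> 'n cmat" where
  "jordan_prod A B = (1/2) *\<^sub>R (A ** B + B ** A)"

lemma sld_eq_jordan_prod: "sld \<rho> \<Xi> = (THE X. hermitian X \<and> jordan_prod \<rho> X = \<Xi>)"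
  by (simp add: sld_def jordan_prod_def)

lemma jordan_prod_diagc_entry:
  "jordan_prod (diagc t) Y $ i $ j = complex_of_real ((t$i + t$j) / 2) * Y$i$j"
  by (simp add: jordan_prod_def diagc_mult_left diagc_mult_right
      scaleR_conv_of_real[where 'a=complex] algebra_simps)

lemma hermitian_jordan_prod_diagc:
  assumes "hermitian Y"
  shows "hermitian (jordan_prod (diagc t) Y)"
  unfolding hermitian_def
proof (intro allI)
  fix i j
  have "Y$i$j = cnj (Y$j$i)" using assms unfolding hermitian_def by blast
  then show "jordan_prod (diagc t) Y $ i $ j = cnj (jordan_prod (diagc t) Y $ j $ i)"
    by (simp add: jordan_prod_diagc_entry add.commute)
qed

lemma sld_diagc:
  assumes pos: "\<forall>k. t$k > 0" and hX: "hermitian X"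
  shows "sld (diagc t) X = (\<chi> i j. 2 * X$i$j / complex_of_real (t$i + t$j))"
    (is "_ = ?S")
  unfolding sld_eq_jordan_prod
proof (rule the_equality)
  have nz: "t$i + t$j \<noteq> 0" for i j
    using pos by (metis add_pos_pos order_less_irrefl)
  have "hermitian ?S"
    unfolding hermitian_def
  proof (intro allI)
    fix i j
    have "X$i$j = cnj (X$j$i)" using hX unfolding hermitian_def by blast
    then show "?S$i$j = cnj (?S$j$i)" by (simp add: add.commute)
  qed
  moreover have "jordan_prod (diagc t) ?S $ i $ j = X$i$j" for i j
    unfolding jordan_prod_diagc_entry vec_lambda_beta using nz[of i j] by (simp del: of_real_add)
  then have "jordan_prod (diagc t) ?S = X"
    unfolding vec_eq_iff by blast
  ultimately show "hermitian ?S \<and> jordan_prod (diagc t) ?S = X" ..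
  fix Y assume "hermitian Y \<and> jordan_prod (diagc t) Y = X"
  then have Y: "X$i$j = complex_of_real ((t$i + t$j) / 2) * Y$i$j" for i j
    using jordan_prod_diagc_entry[of t Y i j] by simp
  show "Y = ?S"
    using nz by (simp add: vec_eq_iff Y del: of_real_add)
qed

lemma sld_inner_diagc:
  assumes pos: "\<forall>k. t$k > 0" and hX: "hermitian X" and hY: "hermitian Y"
  shows "sld_inner (diagc t) X Y = (\<Sum>i\<in>UNIV. \<Sum>j\<in>UNIV. 2 * (X$i$j \<bullet> Y$i$j) / (t$i + t$j))"
proof -
  define A where "A = sld (diagc t) X"
  define B where "B = sld (diagc t) Y"
  have tr: "mtrace (diagc t ** (A ** B + B ** A)) =
      (\<Sum>i\<in>UNIV. \<Sum>j\<in>UNIV. complex_of_real (t$i) * (A$i$j * B$j$i)) +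
      (\<Sum>i\<in>UNIV. \<Sum>j\<in>UNIV. complex_of_real (t$j) * (A$i$j * B$j$i))"
    unfolding mtrace_def diagc_mult_left
    by (subst (2) sum.swap)
      (simp add: matrix_matrix_mult_def sum_distrib_left sum.distrib distrib_left mult.commute)
  have entry: "complex_of_real (t$i) * (A$i$j * B$j$i) + complex_of_real (t$j) * (A$i$j * B$j$i)
      = complex_of_real (4 / (t$i + t$j)) * (X$i$j * cnj (Y$i$j))" for i j
  proof -
    have nz: "t$i + t$j \<noteq> 0" using pos by (metis add_pos_pos order_less_irrefl)
    have "Y$j$i = cnj (Y$i$j)" using hY unfolding hermitian_def by blast
    then have "A$i$j * B$j$i = complex_of_real (4 / (t$i + t$j)^2) * (X$i$j * cnj (Y$i$j))"
      by (simp add: A_def B_def sld_diagc[OF pos hX] sld_diagc[OF pos hY] add.commute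
          power2_eq_square del: of_real_add)
    moreover have cancel: "s * (4 / s^2) = 4 / s" if "s \<noteq> 0" for s :: real
      using that by (simp add: power2_eq_square)
    ultimately have "complex_of_real (t$i) * (A$i$j * B$j$i) + complex_of_real (t$j) * (A$i$j * B$j$i)
        = complex_of_real ((t$i + t$j) * (4 / (t$i + t$j)^2)) * (X$i$j * cnj (Y$i$j))"
      by (simp only: of_real_mult of_real_add algebra_simps)
    then show ?thesis
      by (simp only: cancel[OF nz])
  qed
  have "sld_inner (diagc t) X Y
      = (1/2) * Re (\<Sum>i\<in>UNIV. \<Sum>j\<in>UNIV. complex_of_real (4 / (t$i + t$j)) * (X$i$j * cnj (Y$i$j)))"
    unfolding sld_inner_def A_def[symmetric] B_def[symmetric] mtrace_scaleR tr
    by (simp add: sum.distrib[symmetric] entry)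
  also have "\<dots> = (\<Sum>i\<in>UNIV. \<Sum>j\<in>UNIV. (1/2) * (4 / (t$i + t$j) * (X$i$j \<bullet> Y$i$j)))"
    by (simp add: sum_distrib_left inner_complex_def del: of_real_divide)
  also have "\<dots> = (\<Sum>i\<in>UNIV. \<Sum>j\<in>UNIV. 2 * (X$i$j \<bullet> Y$i$j) / (t$i + t$j))"
    by simp
  finally show ?thesis .
qed

lemma sld_inner_diagc_diagc:
  assumes "\<forall>k. t$k > 0"
  shows "sld_inner (diagc t) (diagc x) (diagc y) = (\<Sum>i\<in>UNIV. x$i * y$i / t$i)"
proof -
  have "sld_inner (diagc t) (diagc x) (diagc y) =
      (\<Sum>i\<in>UNIV. \<Sum>j\<in>UNIV. if i = j then x$i * y$i / t$i else 0)"
    unfolding sld_inner_diagc[OF assms hermitian_diagc hermitian_diagc]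
    by (intro sum.cong refl) (auto simp: diagc_def inner_complex_def)
  then show ?thesis by simp
qed

lemma sld_inner_diagc_diff_left:
  assumes "\<forall>k. t$k > 0" and "hermitian A" and "hermitian B" and "hermitian X"
  shows "sld_inner (diagc t) (A - B) X = sld_inner (diagc t) A X - sld_inner (diagc t) B X"
  unfolding sld_inner_diagc[OF assms(1) hermitian_diff[OF assms(2,3)] assms(4)]
    sld_inner_diagc[OF assms(1,2,4)] sld_inner_diagc[OF assms(1,3,4)]
  by (simp add: inner_diff_left diff_divide_distrib right_diff_distrib sum_subtractf)

lemma sld_inner_diagc_self_eq_0:
  assumes pos: "\<forall>k. t$k > 0" and hA: "hermitian A" and "sld_inner (diagc t) A A = 0"
  shows "A = 0"
proof -
  have nonneg: "0 \<le> 2 * (A$i$j \<bullet> A$i$j) / (t$i + t$j)" for i j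
    using pos by (simp add: add_pos_pos less_imp_le)
  have "2 * (A$i$j \<bullet> A$i$j) / (t$i + t$j) = 0" for i j
    using assms(3) unfolding sld_inner_diagc[OF pos hA hA]
    by (subst (asm) sum_nonneg_eq_0_iff) (auto simp: sum_nonneg_eq_0_iff nonneg sum_nonneg)
  then have "A$i$j = 0" for i j
    using pos by (simp add: add_pos_pos order_less_imp_not_eq2)
  then show ?thesis by (simp add: vec_eq_iff)
qed

lemma tangent_in_kernel_of_constant_linear:
  assumes f: "bounded_linear f" and e: "e > 0" and const: "\<forall>\<tau>\<in>{-e<..<e}. f (r \<tau>) = a"
    and r: "(r has_vector_derivative \<Xi>) (at 0)"
  shows "f \<Xi> = 0"
proof -
  have "((\<lambda>\<tau>. f (r \<tau>)) has_vector_derivative f \<Xi>) (at 0)"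
    by (rule bounded_linear.has_vector_derivative[OF f r])
  moreover have "((\<lambda>\<tau>. f (r \<tau>)) has_vector_derivative 0) (at 0)"
    by (rule has_vector_derivative_transform_within_open[of "\<lambda>_. a" _ _ "{-e<..<e}"])
      (use e const in auto)
  ultimately show ?thesis by (rule vector_derivative_unique_at)
qed

lemma tangent_of_curve_in_Pdot:
  assumes "e > 0" and "r ` {-e<..<e} \<subseteq> Pdot" and "(r has_vector_derivative \<Xi>) (at 0)"
  shows "\<Xi> \<in> TPdot"
proof -
  have "bounded_linear (\<lambda>M::'a cmat. M - ctranspose M)"
    by (intro bounded_linear_sub bounded_linear_ident bounded_linear_ctranspose)
  moreover have "\<forall>\<tau>\<in>{-e<..<e}. r \<tau> - ctranspose (r \<tau>) = 0"
    using assms(2) by (auto simp: Pdot_def hermitian_iff_ctranspose)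
  ultimately have "\<Xi> - ctranspose \<Xi> = 0"
    using tangent_in_kernel_of_constant_linear assms(1,3) by blast
  then have "hermitian \<Xi>" by (simp add: hermitian_iff_ctranspose)
  moreover have "\<forall>\<tau>\<in>{-e<..<e}. mtrace (r \<tau>) = 1"
    using assms(2) by (auto simp: Pdot_def)
  then have "mtrace \<Xi> = 0"
    by (rule tangent_in_kernel_of_constant_linear[OF bounded_linear_mtrace assms(1) _ assms(3)])
  ultimately show ?thesis by (simp add: TPdot_def)
qed

definition quadratic_form :: "'n::finite cmat \<Rightarrow> complex^'n \<Rightarrow> real" where
  "quadratic_form M x = Re (\<Sum>i\<in>UNIV. cnj (x$i) * (M *v x)$i)"

lemma posdef_iff_quadratic_form: "posdef M \<longleftrightarrow> (\<forall>x. x \<noteq> 0 \<longrightarrow> quadratic_form M x > 0)"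
  by (simp add: posdef_def quadratic_form_def)

lemma quadratic_form_add_scaleR: "quadratic_form (A + c *\<^sub>R B) x = quadratic_form A x + c * quadratic_form B x"
proof -
  have "((A + c *\<^sub>R B) *v x)$i = (A *v x)$i + c *\<^sub>R (B *v x)$i" for i
    by (simp add: matrix_vector_mult_def sum.distrib scaleR_sum_right distrib_right)
  then show ?thesis
    unfolding quadratic_form_def by (simp add: distrib_left sum.distrib scaleR_sum_right[symmetric])
qed

lemma norm_vec_power2:
  fixes x :: "'a::real_inner ^ 'n::finite"
  shows "(norm x)^2 = (\<Sum>i\<in>UNIV. (norm (x$i))^2)"
  by (simp add: power2_norm_eq_inner inner_vec_def)

lemma quadratic_form_diagc: "quadratic_form (diagc t) x = (\<Sum>i\<in>UNIV. t$i * (norm (x$i))^2)"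
proof -
  have "(diagc t *v x)$i = complex_of_real (t$i) * x$i" for i
    unfolding diagc_def matrix_vector_mult_def by (simp add: if_distrib if_distribR cong: if_cong)
  then have "cnj (x$i) * (diagc t *v x)$i = complex_of_real (t$i * (norm (x$i))^2)" for i
    by (simp only: of_real_mult complex_norm_square) (simp add: mult_ac)
  then show ?thesis
    unfolding quadratic_form_def by (simp only: of_real_sum[symmetric] Re_complex_of_real)
qed

lemma abs_quadratic_form_le:
  fixes M :: "'n::finite cmat"
  shows "\<bar>quadratic_form M x\<bar> \<le> (\<Sum>i\<in>UNIV. \<Sum>j\<in>UNIV. norm (M$i$j)) * (norm x)^2"
proof -
  have "\<bar>quadratic_form M x\<bar> \<le> norm (\<Sum>i\<in>UNIV. \<Sum>j\<in>UNIV. cnj (x$i) * (M$i$j * x$j))"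
    unfolding quadratic_form_def matrix_vector_mult_def vec_lambda_beta sum_distrib_left
    by (rule abs_Re_le_cmod)
  also have "\<dots> \<le> (\<Sum>i\<in>UNIV. \<Sum>j\<in>UNIV. norm (M$i$j) * (norm x)^2)"
  proof (intro order_trans[OF norm_sum sum_mono] order_trans[OF norm_sum sum_mono])
    fix i j
    have "norm (x$i) * norm (x$j) \<le> norm x * norm x"
      by (intro mult_mono) (auto simp: Finite_Cartesian_Product.norm_nth_le)
    then have "norm (M$i$j) * (norm (x$i) * norm (x$j)) \<le> norm (M$i$j) * (norm x)^2"
      by (simp add: mult_left_mono power2_eq_square)
    then show "norm (cnj (x$i) * (M$i$j * x$j)) \<le> norm (M$i$j) * (norm x)^2"
      by (simp add: norm_mult mult_ac)
  qed
  finally show ?thesis by (simp add: sum_distrib_right)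
qed

lemma eventually_posdef_diagc_perturb:
  fixes t :: "real^'n::finite"
  assumes pos: "\<forall>k. t$k > 0"
  shows "eventually (\<lambda>\<tau>. posdef (diagc t + \<tau> *\<^sub>R X)) (nhds 0)"
proof -
  define m where "m = Min (range (\<lambda>k. t$k))"
  have m_le: "m \<le> t$k" for k unfolding m_def by (rule Min_le) auto
  have "m \<in> range (\<lambda>k. t$k)" unfolding m_def by (rule Min_in) auto
  then have "m > 0" using pos by auto
  define K where "K = (\<Sum>i\<in>UNIV. \<Sum>j\<in>UNIV. norm (X$i$j))"
  have "((\<lambda>\<tau>. \<bar>\<tau>\<bar> * K) \<longlongrightarrow> 0) (nhds 0)"
    by (auto intro!: tendsto_eq_intros filterlim_ident)
  from order_tendstoD(2)[OF this \<open>m > 0\<close>]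
  show ?thesis
  proof (rule eventually_mono)
    fix \<tau> :: real assume small: "\<bar>\<tau>\<bar> * K < m"
    show "posdef (diagc t + \<tau> *\<^sub>R X)"
      unfolding posdef_iff_quadratic_form
    proof (intro allI impI)
      fix x :: "complex^'n" assume "x \<noteq> 0"
      have "m * (norm x)^2 \<le> quadratic_form (diagc t) x"
        unfolding quadratic_form_diagc norm_vec_power2 sum_distrib_left
        by (intro sum_mono mult_right_mono m_le) auto
      moreover have "\<bar>\<tau> * quadratic_form X x\<bar> \<le> \<bar>\<tau>\<bar> * K * (norm x)^2"
        unfolding abs_mult mult.assoc K_def by (rule mult_left_mono[OF abs_quadratic_form_le abs_ge_zero])
      moreover have "\<bar>\<tau>\<bar> * K * (norm x)^2 < m * (norm x)^2"
        using small \<open>x \<noteq> 0\<close> by simp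
      ultimately show "quadratic_form (diagc t + \<tau> *\<^sub>R X) x > 0"
        unfolding quadratic_form_add_scaleR by linarith
    qed
  qed
qed

lemma Dm_subset_Pdot: "(Dm :: 'n::finite cmat set) \<subseteq> Pdot"
proof
  fix \<Theta> :: "'n cmat" assume "\<Theta> \<in> Dm"
  then obtain t where \<Theta>: "\<Theta> = diagc t" and pos: "\<forall>k. t$k > 0"
    and sum1: "(\<Sum>k\<in>UNIV. t$k) = 1"
    unfolding Dm_def by blast
  have "posdef (diagc t)"
    using eventually_nhds_x_imp_x[OF eventually_posdef_diagc_perturb[OF pos, of 0]] by simp
  then show "\<Theta> \<in> Pdot"
    using \<Theta> sum1 by (simp add: Pdot_def hermitian_diagc mtrace_diagc)
qed

lemma line_in_Pdot:
  assumes pos: "\<forall>k. t$k > 0" and sum1: "(\<Sum>k\<in>UNIV. t$k) = 1" and X: "X \<in> TPdot"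
  shows "\<exists>e>0. (\<lambda>\<tau>. diagc t + \<tau> *\<^sub>R X) ` {-e<..<e} \<subseteq> Pdot"
proof -
  obtain e where "e > 0" and e: "\<And>\<tau>. dist \<tau> 0 < e \<Longrightarrow> posdef (diagc t + \<tau> *\<^sub>R X)"
    using eventually_posdef_diagc_perturb[OF pos, of X] unfolding eventually_nhds_metric by blast
  have "diagc t + \<tau> *\<^sub>R X \<in> Pdot" if "\<tau> \<in> {-e<..<e}" for \<tau>
    using X that e[of \<tau>]
    by (auto simp: Pdot_def TPdot_def hermitian_add hermitian_diagc hermitian_scaleR
        mtrace_add mtrace_scaleR mtrace_diagc sum1 dist_real_def)
  then show ?thesis using \<open>e > 0\<close> by blast
qed

lemma smooth_on_line: "smooth_on S (\<lambda>\<tau>::real. A + \<tau> *\<^sub>R (X::'a::real_normed_vector))"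
  unfolding smooth_on_def
proof (intro exI conjI ballI allI)
  define D :: "real list \<Rightarrow> real \<Rightarrow> 'a" where
    "D = (\<lambda>vs. case vs of [] \<Rightarrow> (\<lambda>\<tau>. A + \<tau> *\<^sub>R X) | [v] \<Rightarrow> (\<lambda>_. v *\<^sub>R X) | _ \<Rightarrow> (\<lambda>_. 0))"
  fix x show "D [] x = A + x *\<^sub>R X" by (simp add: D_def)
  fix vs :: "real list"
  show "(D vs has_derivative (\<lambda>v. D (v # vs) x)) (at x)"
  proof (cases vs)
    case Nil
    then show ?thesis by (auto simp: D_def intro!: derivative_eq_intros)
  next
    case (Cons a vs')
    then show ?thesis by (cases vs') (auto simp: D_def intro!: derivative_eq_intros)
  qed
qed

lemma smooth_on_has_derivative:
  assumes "smooth_on U f" and "open U" and "x \<in> U"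
  shows "\<exists>f'. (f has_derivative f') (at x)"
proof -
  obtain D where D0: "\<forall>y\<in>U. D [] y = f y"
    and D: "\<forall>vs. \<forall>y\<in>U. (D vs has_derivative (\<lambda>v. D (v # vs) y)) (at y)"
    using assms(1) unfolding smooth_on_def by blast
  have "(D [] has_derivative (\<lambda>v. D [v] x)) (at x)"
    using D assms(3) by blast
  then have "(f has_derivative (\<lambda>v. D [v] x)) (at x)"
    by (rule has_derivative_transform_within_open[OF _ assms(2,3)]) (simp add: D0)
  then show ?thesis by blast
qed

lemma has_real_derivative_along_curve:
  fixes f :: "'a::real_normed_vector \<Rightarrow> real"
  assumes "(f has_derivative f') (at (r t))" and "(r has_vector_derivative v) (at t)"
  shows "((\<lambda>\<tau>. f (r \<tau>)) has_real_derivative f' v) (at t)"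
proof -
  have "((f \<circ> r) has_derivative (f' \<circ> (\<lambda>\<tau>. \<tau> *\<^sub>R v))) (at t)"
    using assms by (intro diff_chain_at) (simp_all add: has_vector_derivative_def)
  moreover have "f' \<circ> (\<lambda>\<tau>. \<tau> *\<^sub>R v) = (*) (f' v)"
    using has_derivative_bounded_linear[OF assms(1)]
    by (simp add: fun_eq_iff linear_scale bounded_linear.linear mult.commute)
  ultimately show ?thesis by (simp add: has_field_derivative_def comp_def)
qed

lemma inner_ctranspose_hermitian:
  assumes "hermitian X"
  shows "ctranspose A \<bullet> X = A \<bullet> X"
proof -
  have "ctranspose A$i$j \<bullet> X$i$j = A$j$i \<bullet> X$j$i" for i j
  proof -
    have "X$i$j = cnj (X$j$i)" using assms unfolding hermitian_def by blast
    then show ?thesis by (simp add: ctranspose_def inner_complex_def)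
  qed
  then show ?thesis
    unfolding inner_vec_def by (simp add: sum.swap[of "\<lambda>i j. A$j$i \<bullet> X$j$i"])
qed

lemma inner_diagc: "diagc z \<bullet> X = (\<Sum>k\<in>UNIV. z$k * Re (X$k$k))"
proof -
  have "diagc z $ k \<bullet> X $ k = z$k * Re (X$k$k)" for k
    by (simp add: diagc_def inner_vec_def inner_complex_def if_distrib if_distribR cong: if_cong)
  then show ?thesis by (simp add: inner_vec_def)
qed

lemma sld_inner_diagc_jordan_prod:
  assumes pos: "\<forall>k. t$k > 0" and hY: "hermitian Y" and hX: "hermitian X"
  shows "sld_inner (diagc t) (jordan_prod (diagc t) Y) X = Y \<bullet> X"
proof -
  have "2 * (jordan_prod (diagc t) Y $ i $ j \<bullet> X$i$j) / (t$i + t$j) = Y$i$j \<bullet> X$i$j" for i j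
  proof -
    have entry: "jordan_prod (diagc t) Y $ i $ j \<bullet> X$i$j = ((t$i + t$j) / 2) * (Y$i$j \<bullet> X$i$j)"
      by (simp add: jordan_prod_diagc_entry inner_complex_def algebra_simps)
    have cancel: "2 * ((s / 2) * w) / s = w" if "s > 0" for s w :: real
      using that by simp
    show ?thesis
      unfolding entry using pos by (intro cancel) (simp add: add_pos_pos)
  qed
  then show ?thesis
    unfolding sld_inner_diagc[OF pos hermitian_jordan_prod_diagc[OF hY] hX] by (simp add: inner_vec_def)
qed

lemma sld_riesz_diagc:
  fixes t :: "real^'n::finite" and g :: "'n cmat"
  assumes pos: "\<forall>k. t$k > 0" and sum1: "(\<Sum>k\<in>UNIV. t$k) = 1"
  obtains G where "G \<in> TPdot" and "\<And>\<Xi>. \<Xi> \<in> TPdot \<Longrightarrow> sld_inner (diagc t) G \<Xi> = g \<bullet> \<Xi>"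
proof -
  \<comment> \<open>The SLD of G is the Hermitian part of g, shifted by a multiple of the identity so that tr G = 0.\<close>
  define lam where "lam = (\<Sum>i\<in>UNIV. t$i * Re (g$i$i))"
  define Y where "Y = (1/2) *\<^sub>R (g + ctranspose g) - diagc (\<chi> k. lam)"
  have "hermitian Y"
    unfolding Y_def by (intro hermitian_diff hermitian_diagc) (simp add: hermitian_def ctranspose_def)
  have Y_diag: "Y$i$i = complex_of_real (Re (g$i$i) - lam)" for i
    by (simp add: Y_def ctranspose_def diagc_def complex_add_cnj)
  have "mtrace (jordan_prod (diagc t) Y) = complex_of_real (\<Sum>i\<in>UNIV. t$i * (Re (g$i$i) - lam))"
    by (simp add: mtrace_def jordan_prod_diagc_entry Y_diag)
  also have "\<dots> = 0"
    by (simp add: right_diff_distrib sum_subtractf lam_def sum_distrib_right[symmetric] sum1)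
  finally have "jordan_prod (diagc t) Y \<in> TPdot"
    using hermitian_jordan_prod_diagc[OF \<open>hermitian Y\<close>] by (simp add: TPdot_def)
  moreover have "sld_inner (diagc t) (jordan_prod (diagc t) Y) \<Xi> = g \<bullet> \<Xi>" if "\<Xi> \<in> TPdot" for \<Xi>
  proof -
    have hX: "hermitian \<Xi>" and trX: "mtrace \<Xi> = 0" using that by (auto simp: TPdot_def)
    have "diagc (\<chi> k. lam) \<bullet> \<Xi> = lam * Re (mtrace \<Xi>)"
      by (simp add: inner_diagc mtrace_def sum_distrib_left)
    then show ?thesis
      unfolding sld_inner_diagc_jordan_prod[OF pos \<open>hermitian Y\<close> hX]
      by (simp add: Y_def trX inner_diff_left inner_add_left inner_ctranspose_hermitian[OF hX])
  qed
  ultimately show ?thesis using that by blast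
qed

lemma sld_inner_diagc_cancel:
  assumes pos: "\<forall>k. t$k > 0" and "G \<in> TPdot" and "G' \<in> TPdot"
    and "\<And>\<Xi>. \<Xi> \<in> TPdot \<Longrightarrow> sld_inner (diagc t) G \<Xi> = sld_inner (diagc t) G' \<Xi>"
  shows "G = G'"
proof -
  have herm: "hermitian G" "hermitian G'"
    using assms(2,3) by (auto simp: TPdot_def)
  have "G - G' \<in> TPdot"
    using assms(2,3) by (rule TPdot_diff)
  then have "sld_inner (diagc t) (G - G') (G - G') = 0"
    using assms(4) by (simp add: sld_inner_diagc_diff_left[OF pos herm] TPdot_def)
  then show ?thesis
    using sld_inner_diagc_self_eq_0[OF pos] \<open>G - G' \<in> TPdot\<close> by (force simp: TPdot_def)
qed

lemma sld_inner_sld_grad_diagc: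
  fixes L :: "'n::finite cmat \<Rightarrow> real"
  assumes pos: "\<forall>k. t$k > 0" and sum1: "(\<Sum>k\<in>UNIV. t$k) = 1"
    and dL: "(L has_derivative dL) (at (diagc t))" and \<Xi>: "\<Xi> \<in> TPdot"
  shows "sld_inner (diagc t) (sld_grad L (diagc t)) \<Xi> = dL \<Xi>"
proof -
  have "linear dL" using dL by (simp add: has_derivative_bounded_linear bounded_linear.linear)
  \<comment> \<open>Riesz representation of dL for the Euclidean inner product, via its adjoint.\<close>
  then obtain g where g: "\<And>X. dL X = g \<bullet> X"
    by (metis adjoint_clauses(2) real_inner_1_left)
  obtain G where "G \<in> TPdot" and G: "\<And>X. X \<in> TPdot \<Longrightarrow> sld_inner (diagc t) G X = dL X"
    using sld_riesz_diagc[OF pos sum1, of g] g by metis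
  have line: "((\<lambda>\<tau>. diagc t + \<tau> *\<^sub>R X) has_vector_derivative X) (at 0)" for X :: "'n cmat"
    by (auto intro!: derivative_eq_intros simp: has_vector_derivative_def)
  let ?grad = "\<lambda>G. G \<in> TPdot \<and>
     (\<forall>(r :: real \<Rightarrow> 'n cmat) \<Xi> e. e > 0 \<and> smooth_on {-e<..<e} r \<and> r ` {-e<..<e} \<subseteq> Pdot
        \<and> r 0 = diagc t \<and> (r has_vector_derivative \<Xi>) (at 0)
        \<longrightarrow> ((\<lambda>\<tau>. L (r \<tau>)) has_real_derivative sld_inner (diagc t) G \<Xi>) (at 0))"
  have "?grad G"
  proof (intro conjI allI impI)
    show "G \<in> TPdot" by fact
    fix r :: "real \<Rightarrow> 'n cmat" and X e
    assume r: "e > 0 \<and> smooth_on {-e<..<e} r \<and> r ` {-e<..<e} \<subseteq> Pdot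
      \<and> r 0 = diagc t \<and> (r has_vector_derivative X) (at 0)"
    then have "X \<in> TPdot" using tangent_of_curve_in_Pdot by blast
    then show "((\<lambda>\<tau>. L (r \<tau>)) has_real_derivative sld_inner (diagc t) G X) (at 0)"
      using has_real_derivative_along_curve[of L dL r 0 X] r dL G by simp
  qed
  moreover have "G' = G" if "?grad G'" for G'
  proof (rule sld_inner_diagc_cancel[OF pos])
    fix X :: "'n cmat" assume "X \<in> TPdot"
    then obtain e where "e > 0" and "(\<lambda>\<tau>. diagc t + \<tau> *\<^sub>R X) ` {-e<..<e} \<subseteq> Pdot"
      using line_in_Pdot[OF pos sum1] by blast
    then have "((\<lambda>\<tau>. L (diagc t + \<tau> *\<^sub>R X)) has_real_derivative sld_inner (diagc t) G' X) (at 0)"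
      using that[THEN conjunct2, rule_format, where r="\<lambda>\<tau>. diagc t + \<tau> *\<^sub>R X" and \<Xi>=X and e=e]
        line[of X] smooth_on_line[of "{-e<..<e}" "diagc t" X] by auto
    moreover have "((\<lambda>\<tau>. L (diagc t + \<tau> *\<^sub>R X)) has_real_derivative dL X) (at 0)"
      using has_real_derivative_along_curve[of L dL _ 0, OF _ line] dL by simp
    ultimately show "sld_inner (diagc t) G' X = sld_inner (diagc t) G X"
      using G[OF \<open>X \<in> TPdot\<close>] DERIV_unique by metis
  qed (use that \<open>G \<in> TPdot\<close> in auto)
  ultimately have "sld_grad L (diagc t) = G"
    unfolding sld_grad_def by (rule the_equality)
  then show ?thesis using G[OF \<Xi>] by simp
qed

lemma sqrt_in_Sm_mu:
  assumes pos: "\<forall>k. s$k > 0" and sum1: "(\<Sum>k\<in>UNIV. s$k) = 1"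
  shows "(\<chi> k. sqrt (s$k)) \<in> Sm" and "mu (\<chi> k. sqrt (s$k)) = diagc s"
proof -
  have sq: "(sqrt (s$k))^2 = s$k" for k using pos by (simp add: less_imp_le)
  show "(\<chi> k. sqrt (s$k)) \<in> Sm"
    using pos unfolding Sm_def norm_vec_def L2_set_def by (auto simp: sq sum1 order_less_imp_not_eq2)
  show "mu (\<chi> k. sqrt (s$k)) = diagc s"
    by (simp add: mu_def sq)
qed

lemma L_on_Dm:
  assumes L_mu: "\<forall>w\<in>Sm. L (mu w) = 4 * Lambda c w"
    and pos: "\<forall>k. s$k > 0" and sum1: "(\<Sum>k\<in>UNIV. s$k) = 1"
  shows "L (diagc s) = -2 * (\<Sum>k\<in>UNIV. c$k * s$k)"
proof -
  have "L (diagc s) = 4 * Lambda c (\<chi> k. sqrt (s$k))"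
    using L_mu sqrt_in_Sm_mu[OF pos sum1] by metis
  also have "\<dots> = -2 * (\<Sum>k\<in>UNIV. c$k * s$k)"
    using pos by (simp add: Lambda_def less_imp_le)
  finally show ?thesis .
qed

lemma derivative_along_TDm:
  fixes L :: "'n::finite cmat \<Rightarrow> real"
  assumes L_mu: "\<forall>w\<in>Sm. L (mu w) = 4 * Lambda c w"
    and pos: "\<forall>k. t$k > 0" and sum1: "(\<Sum>k\<in>UNIV. t$k) = 1" and sum0: "(\<Sum>k\<in>UNIV. z$k) = 0"
    and dL: "(L has_derivative dL) (at (diagc t))"
  shows "dL (diagc z) = -2 * (\<Sum>k\<in>UNIV. c$k * z$k)"
proof -
  have "eventually (\<lambda>\<tau>. \<forall>k. t$k + \<tau> * z$k > 0) (nhds 0)"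
  proof (rule eventually_all_finite, intro allI order_tendstoD(1))
    show "((\<lambda>\<tau>. t$k + \<tau> * z$k) \<longlongrightarrow> t$k) (nhds 0)" for k
      by (auto intro!: tendsto_eq_intros filterlim_ident)
  qed (use pos in auto)
  then have "eventually (\<lambda>\<tau>. L (diagc t + \<tau> *\<^sub>R diagc z)
      = -2 * (\<Sum>k\<in>UNIV. c$k * (t$k + \<tau> * z$k))) (nhds 0)"
  proof (rule eventually_mono)
    fix \<tau> :: real assume "\<forall>k. t$k + \<tau> * z$k > 0"
    moreover have "(\<Sum>k\<in>UNIV. t$k + \<tau> * z$k) = 1"
      by (simp add: sum.distrib sum1 sum_distrib_left[symmetric] sum0)
    ultimately show "L (diagc t + \<tau> *\<^sub>R diagc z) = -2 * (\<Sum>k\<in>UNIV. c$k * (t$k + \<tau> * z$k))"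
      using L_on_Dm[OF L_mu, of "t + \<tau> *\<^sub>R z"] by (simp add: diagc_add_scaleR)
  qed
  moreover have "((\<lambda>\<tau>. -2 * (\<Sum>k\<in>UNIV. c$k * (t$k + \<tau> * z$k))) has_real_derivative
      -2 * (\<Sum>k\<in>UNIV. c$k * z$k)) (at 0)"
    by (auto intro!: derivative_eq_intros simp: mult.commute)
  ultimately have "((\<lambda>\<tau>. L (diagc t + \<tau> *\<^sub>R diagc z)) has_real_derivative
      -2 * (\<Sum>k\<in>UNIV. c$k * z$k)) (at 0)"
    by (subst DERIV_cong_ev) auto
  moreover have "((\<lambda>\<tau>. L (diagc t + \<tau> *\<^sub>R diagc z)) has_real_derivative dL (diagc z)) (at 0)"
    using dL by (intro has_real_derivative_along_curve)
      (auto intro!: derivative_eq_intros simp: has_vector_derivative_def)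
  ultimately show ?thesis using DERIV_unique by metis
qed

lemma mu_grad_Lambda_diagc:
  assumes "\<forall>k. t$k > 0"
  shows "mu_grad_Lambda c (diagc t) = diagc (\<chi> k. 2 * t$k * ((\<Sum>i\<in>UNIV. c$i * t$i) - c$k))"
proof -
  have "(\<chi> k. sqrt (Re (diagc t $ k $ k))) = (\<chi> k. sqrt (t$k))"
    by (simp add: diagc_def)
  moreover have "(sqrt (t$k))^2 = t$k" for k using assms by (simp add: less_imp_le)
  ultimately show ?thesis
    unfolding mu_grad_Lambda_def Let_def mu_push_def grad_Lambda_def
    by (intro arg_cong[where f=diagc]) (simp add: vec_eq_iff algebra_simps power2_eq_square[symmetric])
qed

lemma sld_inner_mu_grad_Lambda_diagc:
  assumes pos: "\<forall>k. t$k > 0" and sum0: "(\<Sum>k\<in>UNIV. z$k) = 0"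
  shows "sld_inner (diagc t) (mu_grad_Lambda c (diagc t)) (diagc z) = -2 * (\<Sum>k\<in>UNIV. c$k * z$k)"
proof -
  define S where "S = (\<Sum>i\<in>UNIV. c$i * t$i)"
  have "sld_inner (diagc t) (mu_grad_Lambda c (diagc t)) (diagc z)
      = (\<Sum>k\<in>UNIV. 2 * t$k * (S - c$k) * z$k / t$k)"
    by (simp add: mu_grad_Lambda_diagc[OF pos] sld_inner_diagc_diagc[OF pos] S_def)
  also have "\<dots> = (\<Sum>k\<in>UNIV. 2 * S * z$k - 2 * (c$k * z$k))"
  proof (intro sum.cong refl)
    fix k
    have "t$k > 0" using pos by blast
    then show "2 * t$k * (S - c$k) * z$k / t$k = 2 * S * z$k - 2 * (c$k * z$k)"
      by (simp add: field_simps)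
  qed
  also have "\<dots> = -2 * (\<Sum>k\<in>UNIV. c$k * z$k)"
    by (simp add: sum_subtractf sum_distrib_left[symmetric] sum0)
  finally show ?thesis .
qed

theorem lemma2:
  fixes c :: "real^'n::finite" and L :: "'n cmat \<Rightarrow> real"
    and \<Theta> Z :: "'n cmat"
  assumes "CARD('n) \<ge> 2"
    and "\<exists>U. open U \<and> Pdot \<subseteq> U \<and> smooth_on U L"
    and "\<forall>w\<in>Sm. L (mu w) = 4 * Lambda c w"
    and "\<Theta> \<in> Dm" and "Z \<in> TDm"
  shows "sld_inner \<Theta> (sld_grad L \<Theta>) Z = sld_inner \<Theta> (mu_grad_Lambda c \<Theta>) Z"
proof -
  obtain t where \<Theta>: "\<Theta> = diagc t" and pos: "\<forall>k. t$k > 0" and sum1: "(\<Sum>k\<in>UNIV. t$k) = 1"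
    using assms(4) unfolding Dm_def by blast
  obtain z where Z: "Z = diagc z" and sum0: "(\<Sum>k\<in>UNIV. z$k) = 0"
    using assms(5) unfolding TDm_def by blast
  obtain dL where dL: "(L has_derivative dL) (at \<Theta>)"
    using assms(2) Dm_subset_Pdot assms(4) smooth_on_has_derivative by blast
  have "sld_inner \<Theta> (sld_grad L \<Theta>) Z = dL Z"
    using sld_inner_sld_grad_diagc[OF pos sum1] dL assms(5) TDm_subset_TPdot \<Theta> by blast
  also have "\<dots> = -2 * (\<Sum>k\<in>UNIV. c$k * z$k)"
    using derivative_along_TDm[OF assms(3) pos sum1 sum0] dL \<Theta> Z by simp
  also have "\<dots> = sld_inner \<Theta> (mu_grad_Lambda c \<Theta>) Z"
    using sld_inner_mu_grad_Lambda_diagc[OF pos sum0] \<Theta> Z by simp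
  finally show ?thesis .
qed

end
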